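(* For any graph $F$ on $y\ge1$ vertices with average degree $d$ and any real $\lambda>0$, \[ \frac{\lambda Z_F'(\lambda)}{Z_F(\lambda)}\ \ge\ \frac{\lambda}{1+\lambda}\,y\,(1+\lambda)^{-d}, \qquad \log Z_F(\lambda)\ \ge\ \begin{cases} y\log(1+\lambda) & \text{if } d=0,\\[2pt] \dfrac{y}{d}\bigl(1-(1+\lambda)^{-d}\bigr) & \text{if } d>0.\end{cases} \]
   Context: $\log$ is the natural logarithm. For a graph $F$, $Z_F(\lambda)=\sum_{I}\lambda^{|I|}$ where the sum is over all independent sets $I$ of $F$ (including $\varnothing$), and $Z_F'$ is its derivative in $\lambda$. The average degree of $F$ is $2|E(F)|/|V(F)|$. *)

theory Defs
  imports "HOL-Analysis.Analysis"
begin

definition simple_graph :: "'a set \<Rightarrow> 'a set set \<Rightarrow> bool" where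
  "simple_graph V E \<longleftrightarrow> finite V \<and> (\<forall>e\<in>E. e \<subseteq> V \<and> card e = 2)"

definition indep_sets :: "'a set \<Rightarrow> 'a set set \<Rightarrow> 'a set set" where
  "indep_sets V E = {I. I \<subseteq> V \<and> (\<forall>e\<in>E. \<not> e \<subseteq> I)}"

definition indep_poly :: "'a set \<Rightarrow> 'a set set \<Rightarrow> real \<Rightarrow> real" where
  "indep_poly V E lam = (\<Sum>I\<in>indep_sets V E. lam ^ card I)"

definition avg_degree :: "'a set \<Rightarrow> 'a set set \<Rightarrow> real" where
  "avg_degree V E = 2 * real (card E) / real (card V)"

end

theory Submission imports Defs begin

text \<open>
  For a vertex \<open>v\<close> of degree \<open>k\<close>, every independent set splits into a part inside the
  closed neighbourhood \<open>N[v]\<close> (at most \<open>k + 1\<close> vertices) and an independent set avoiding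
  \<open>N[v]\<close>; adding \<open>v\<close> to the latter gives an independent set containing \<open>v\<close>. Hence the
  independent sets containing \<open>v\<close> have total weight at least \<open>\<lambda> (1 + \<lambda>) powr (- k - 1) Z(\<lambda>)\<close>.
  Summing over \<open>v\<close> gives \<open>\<lambda> Z'(\<lambda>)\<close>, and convexity of \<open>k \<mapsto> (1 + \<lambda>) powr (- k)\<close> replaces
  the degrees by their average \<open>d\<close>. Integrating \<open>(ln Z)' \<ge> y (1 + \<lambda>) powr (- d - 1)\<close>
  from \<open>Z(0) = 1\<close> yields the second bound.
\<close>

definition closed_nbhd :: "'a set set \<Rightarrow> 'a \<Rightarrow> 'a set" where
  "closed_nbhd E v = insert v (\<Union>{e\<in>E. v \<in> e})"

definition vertex_degree :: "'a set set \<Rightarrow> 'a \<Rightarrow> nat" where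
  "vertex_degree E v = card {e\<in>E. v \<in> e}"

lemma simple_graph_finite: "simple_graph V E \<Longrightarrow> finite V"
  by (simp add: simple_graph_def)

lemma simple_graph_edge: "simple_graph V E \<Longrightarrow> e \<in> E \<Longrightarrow> e \<subseteq> V \<and> card e = 2"
  by (simp add: simple_graph_def)

lemma simple_graph_finite_edges: "simple_graph V E \<Longrightarrow> finite E"
  using finite_subset[of E "Pow V"] by (auto simp: simple_graph_def)

lemma indep_sets_subset: "I \<in> indep_sets V E \<Longrightarrow> I \<subseteq> V"
  by (simp add: indep_sets_def)

lemma finite_indep_sets: "finite V \<Longrightarrow> finite (indep_sets V E)"
  by (rule finite_subset[of _ "Pow V"]) (auto simp: indep_sets_def)

lemma empty_in_indep_sets: "simple_graph V E \<Longrightarrow> {} \<in> indep_sets V E"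
  by (force simp: indep_sets_def dest: simple_graph_edge)

lemma indep_poly_ge_1:
  assumes "simple_graph V E" and "t \<ge> 0"
  shows "indep_poly V E t \<ge> 1"
proof -
  have "t ^ card ({}::'a set) \<le> indep_poly V E t"
    unfolding indep_poly_def
    using assms empty_in_indep_sets[OF assms(1)] finite_indep_sets[OF simple_graph_finite]
    by (intro member_le_sum) auto
  then show ?thesis by simp
qed

lemma indep_poly_0:
  assumes sg: "simple_graph V E"
  shows "indep_poly V E 0 = 1"
proof -
  have finite_members: "finite I" if "I \<in> indep_sets V E" for I
    using that by (rule finite_subset[OF indep_sets_subset simple_graph_finite[OF sg]])
  have "indep_poly V E 0 = (\<Sum>I\<in>indep_sets V E. if I = {} then 1 else 0)"
    unfolding indep_poly_def by (rule sum.cong[OF refl]) (auto simp: finite_members)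
  also have "\<dots> = 1"
    using finite_indep_sets[OF simple_graph_finite[OF sg]] empty_in_indep_sets[OF sg]
    by (simp add: sum.delta)
  finally show ?thesis .
qed

lemma sum_card_mult_eq_sum_members:
  fixes f :: "'a set \<Rightarrow> 'b::comm_semiring_1"
  assumes "finite V" "finite F" "F \<subseteq> Pow V"
  shows "(\<Sum>I\<in>F. of_nat (card I) * f I) = (\<Sum>v\<in>V. \<Sum>I\<in>{I\<in>F. v \<in> I}. f I)"
proof -
  have "(\<Sum>v\<in>V. \<Sum>I\<in>{I\<in>F. v \<in> I}. f I) = (\<Sum>I\<in>F. \<Sum>v\<in>{v\<in>V. v \<in> I}. f I)"
    using assms(1,2) by (rule sum.swap_restrict)
  also have "\<dots> = (\<Sum>I\<in>F. of_nat (card I) * f I)"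
  proof (rule sum.cong[OF refl])
    fix I assume "I \<in> F"
    then have "{v\<in>V. v \<in> I} = I" using assms(3) by blast
    then show "(\<Sum>v\<in>{v\<in>V. v \<in> I}. f I) = of_nat (card I) * f I" by simp
  qed
  finally show ?thesis ..
qed

lemma sum_vertex_degree:
  assumes sg: "simple_graph V E"
  shows "(\<Sum>v\<in>V. vertex_degree E v) = 2 * card E"
proof -
  have "(\<Sum>v\<in>V. vertex_degree E v) = (\<Sum>e\<in>E. card e * 1)"
  proof -
    have "E \<subseteq> Pow V" using simple_graph_edge[OF sg] by blast
    then show ?thesis
      using sum_card_mult_eq_sum_members[of V E "\<lambda>_. 1::nat"] simple_graph_finite[OF sg]
        simple_graph_finite_edges[OF sg]
      by (simp add: vertex_degree_def)
  qed
  also have "\<dots> = (\<Sum>e\<in>E. 2)"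
    using simple_graph_edge[OF sg] by simp
  finally show ?thesis by simp
qed

lemma sum_vertex_degree_eq_card_mult_avg_degree:
  assumes sg: "simple_graph V E"
  shows "(\<Sum>v\<in>V. real (vertex_degree E v)) = real (card V) * avg_degree V E"
proof (cases "V = {}")
  case False
  then have "card V > 0" using simple_graph_finite[OF sg] by (simp add: card_gt_0_iff)
  then show ?thesis
    using arg_cong[OF sum_vertex_degree[OF sg], of real] unfolding avg_degree_def by simp
qed simp

lemma card_closed_nbhd_le:
  assumes sg: "simple_graph V E"
  shows "card (closed_nbhd E v) \<le> Suc (vertex_degree E v)"
proof -
  let ?F = "{e\<in>E. v \<in> e}"
  let ?U = "\<Union>e\<in>?F. e - {v}"
  have "closed_nbhd E v = {v} \<union> ?U"
    unfolding closed_nbhd_def by auto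
  then have "card (closed_nbhd E v) \<le> card {v} + card ?U"
    by (simp only: card_Un_le)
  moreover have "card ?U \<le> (\<Sum>e\<in>?F. card (e - {v}))"
    using simple_graph_finite_edges[OF sg] by (intro card_UN_le) simp
  moreover have "(\<Sum>e\<in>?F. card (e - {v})) = card ?F"
    using simple_graph_edge[OF sg] by (simp add: card_Diff_singleton)
  ultimately show ?thesis
    by (simp add: vertex_degree_def)
qed

lemma sum_power_card_Pow:
  "finite N \<Longrightarrow> (\<Sum>S\<in>Pow N. (t::'a::comm_semiring_1) ^ card S) = (1 + t) ^ card N"
  using prod_add[of N "\<lambda>_. t" "\<lambda>_. 1"] by (simp add: add.commute)

lemma indep_poly_le_disjoint:
  assumes sg: "simple_graph V E" and N: "finite N" and t: "t \<ge> 0"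
  shows "indep_poly V E t
    \<le> (1 + t) ^ card N * (\<Sum>J\<in>{J\<in>indep_sets V E. J \<inter> N = {}}. t ^ card J)"
proof -
  define IS where "IS = indep_sets V E"
  define B where "B = {J\<in>IS. J \<inter> N = {}}"
  have fIS: "finite IS"
    unfolding IS_def using finite_indep_sets simple_graph_finite[OF sg] .
  have fB: "finite B" unfolding B_def using fIS by simp
  have split_card: "card I = card (I - N) + card (I \<inter> N)" if "I \<in> IS" for I
    using that card_Int_Diff[of I N] finite_subset[OF indep_sets_subset simple_graph_finite[OF sg]]
    unfolding IS_def by auto
  have "indep_poly V E t = (\<Sum>I\<in>IS. t ^ card (I - N) * t ^ card (I \<inter> N))"
    unfolding indep_poly_def IS_def[symmetric]
    by (rule sum.cong) (simp_all add: split_card power_add)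
  also have "\<dots> = (\<Sum>(J, S)\<in>(\<lambda>I. (I - N, I \<inter> N)) ` IS. t ^ card J * t ^ card S)"
    by (subst sum.reindex) (auto simp: inj_on_def)
  also have "\<dots> \<le> (\<Sum>(J, S)\<in>B \<times> Pow N. t ^ card J * t ^ card S)"
    using fB N t unfolding B_def IS_def indep_sets_def
    by (intro sum_mono2) auto
  also have "\<dots> = (\<Sum>J\<in>B. t ^ card J) * (\<Sum>S\<in>Pow N. t ^ card S)"
    by (simp add: sum_product sum.cartesian_product)
  finally show ?thesis
    using sum_power_card_Pow[OF N, of t] unfolding B_def IS_def by (simp add: mult.commute)
qed

lemma insert_in_indep_sets:
  assumes sg: "simple_graph V E" and "v \<in> V"
    and J: "J \<in> indep_sets V E" "J \<inter> closed_nbhd E v = {}"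
  shows "insert v J \<in> indep_sets V E"
  unfolding indep_sets_def
proof (intro CollectI conjI ballI)
  show "insert v J \<subseteq> V" using assms indep_sets_subset by blast
next
  fix e assume e: "e \<in> E"
  show "\<not> e \<subseteq> insert v J"
  proof
    assume sub: "e \<subseteq> insert v J"
    show False
    proof (cases "v \<in> e")
      case True
      then have "e \<subseteq> closed_nbhd E v" unfolding closed_nbhd_def using e by blast
      then have "e \<subseteq> {v}" using sub J(2) by blast
      then show False using card_mono[of "{v}" e] simple_graph_edge[OF sg e] by simp
    next
      case False
      then show False using sub e J(1) unfolding indep_sets_def by blast
    qed
  qed
qed

lemma sum_indep_sets_disjoint_closed_nbhd_le:
  fixes t :: real
  assumes sg: "simple_graph V E" and v: "v \<in> V" and t: "t \<ge> 0"
  shows "t * (\<Sum>J\<in>{J\<in>indep_sets V E. J \<inter> closed_nbhd E v = {}}. t ^ card J)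
    \<le> (\<Sum>I\<in>{I\<in>indep_sets V E. v \<in> I}. t ^ card I)"
proof -
  define B where "B = {J\<in>indep_sets V E. J \<inter> closed_nbhd E v = {}}"
  have v_notin: "v \<notin> J" if "J \<in> B" for J
    using that unfolding B_def closed_nbhd_def by blast
  have finite_B: "finite J" if "J \<in> B" for J
    using that unfolding B_def
    by (auto intro: finite_subset[OF indep_sets_subset simple_graph_finite[OF sg]])
  have inj: "inj_on (insert v) B"
    by (rule inj_onI) (metis Diff_insert_absorb v_notin)
  have "t * (\<Sum>J\<in>B. t ^ card J) = (\<Sum>J\<in>B. t ^ card (insert v J))"
    unfolding sum_distrib_left by (rule sum.cong[OF refl]) (simp add: v_notin finite_B)
  also have "\<dots> = (\<Sum>I\<in>insert v ` B. t ^ card I)"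
    by (simp add: sum.reindex[OF inj])
  also have "\<dots> \<le> (\<Sum>I\<in>{I\<in>indep_sets V E. v \<in> I}. t ^ card I)"
    using finite_indep_sets[OF simple_graph_finite[OF sg]] t insert_in_indep_sets[OF sg v]
    unfolding B_def by (intro sum_mono2) auto
  finally show ?thesis unfolding B_def .
qed

lemma sum_indep_sets_containing_ge:
  assumes sg: "simple_graph V E" and v: "v \<in> V" and t: "t > 0"
  shows "t / (1 + t) * indep_poly V E t * (1 + t) powr (- real (vertex_degree E v))
    \<le> (\<Sum>I\<in>{I\<in>indep_sets V E. v \<in> I}. t ^ card I)"
proof -
  define A where "A = (\<Sum>J\<in>{J\<in>indep_sets V E. J \<inter> closed_nbhd E v = {}}. t ^ card J)"
  define k where "k = vertex_degree E v"
  define S where "S = (\<Sum>I\<in>{I\<in>indep_sets V E. v \<in> I}. t ^ card I)"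
  have "A \<ge> 0" unfolding A_def using t by (simp add: sum_nonneg)
  have "finite (closed_nbhd E v)"
    using simple_graph_finite_edges[OF sg] simple_graph_edge[OF sg]
    by (auto simp: closed_nbhd_def intro: finite_subset[OF _ simple_graph_finite[OF sg]])
  then have "indep_poly V E t \<le> (1 + t) ^ card (closed_nbhd E v) * A"
    unfolding A_def using indep_poly_le_disjoint[OF sg] t by simp
  also have "\<dots> \<le> (1 + t) ^ Suc k * A"
    using card_closed_nbhd_le[OF sg] t \<open>A \<ge> 0\<close> unfolding k_def
    by (intro mult_right_mono power_increasing) auto
  finally have "t * indep_poly V E t \<le> (1 + t) ^ Suc k * (t * A)"
    using t by (simp add: mult_left_mono mult.left_commute)
  also have "\<dots> \<le> (1 + t) ^ Suc k * S"
    unfolding A_def S_def using sum_indep_sets_disjoint_closed_nbhd_le[OF sg v] t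
    by (intro mult_left_mono) simp_all
  finally have bound: "t * indep_poly V E t \<le> (1 + t) ^ Suc k * S" .
  have "(1 + t) powr (- real k) / (1 + t) = 1 / (1 + t) ^ Suc k"
    using t by (simp add: powr_minus powr_realpow divide_inverse)
  then have "t / (1 + t) * indep_poly V E t * (1 + t) powr (- real k)
      = t * indep_poly V E t / (1 + t) ^ Suc k"
    by (metis times_divide_eq_right times_divide_eq_left mult.commute mult_1_right)
  also have "\<dots> \<le> S"
    using bound t by (simp add: pos_divide_le_eq mult.commute)
  finally show ?thesis
    unfolding k_def S_def .
qed

lemma sum_powr_neg_ge_card_mult_powr_mean:
  fixes x :: "'a \<Rightarrow> real"
  assumes "c > 0" and mean: "(\<Sum>v\<in>V. x v) = real (card V) * m"
  shows "(\<Sum>v\<in>V. c powr (- x v)) \<ge> real (card V) * c powr (- m)"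
proof -
  define L where "L = ln c"
  define a where "a = c powr (- m)"
  have powr_exp: "c powr z = exp (z * L)" for z
    using \<open>c > 0\<close> unfolding L_def by (simp add: powr_def)
  \<comment> \<open>tangent line of the convex function \<open>z \<mapsto> c powr (- z)\<close> at the mean \<open>m\<close>\<close>
  have tangent: "a * (1 - (x v - m) * L) \<le> c powr (- x v)" for v
  proof -
    have "c powr (- x v) = a * exp (- ((x v - m) * L))"
      unfolding a_def powr_exp by (simp add: exp_add[symmetric] algebra_simps)
    moreover have "a > 0" unfolding a_def using \<open>c > 0\<close> by simp
    ultimately show ?thesis
      using exp_ge_add_one_self[of "- ((x v - m) * L)"] by simp
  qed
  have "real (card V) * a = a * (real (card V) - L * ((\<Sum>v\<in>V. x v) - real (card V) * m))"
    using mean by simp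
  also have "\<dots> = (\<Sum>v\<in>V. a * (1 - (x v - m) * L))"
    by (simp add: sum_distrib_left[symmetric] sum_subtractf sum_distrib_right[symmetric]
        algebra_simps)
  also have "\<dots> \<le> (\<Sum>v\<in>V. c powr (- x v))"
    by (rule sum_mono) (rule tangent)
  finally show ?thesis
    unfolding a_def .
qed

text \<open>\<open>indep_size_poly V E \<lambda>\<close> is \<open>\<lambda> Z'(\<lambda>)\<close>.\<close>

definition indep_size_poly :: "'a set \<Rightarrow> 'a set set \<Rightarrow> real \<Rightarrow> real" where
  "indep_size_poly V E t = (\<Sum>I\<in>indep_sets V E. real (card I) * t ^ card I)"

lemma indep_size_poly_ge:
  assumes sg: "simple_graph V E" and t: "t > 0"
  shows "t / (1 + t) * real (card V) * (1 + t) powr (- avg_degree V E)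
    \<le> indep_size_poly V E t / indep_poly V E t"
proof -
  define Z where "Z = indep_poly V E t"
  have "Z > 0" unfolding Z_def using indep_poly_ge_1[OF sg, of t] t by simp
  have "real (card V) * (1 + t) powr (- avg_degree V E)
      \<le> (\<Sum>v\<in>V. (1 + t) powr (- real (vertex_degree E v)))"
    using t sum_vertex_degree_eq_card_mult_avg_degree[OF sg]
    by (intro sum_powr_neg_ge_card_mult_powr_mean) auto
  then have "t / (1 + t) * Z * (real (card V) * (1 + t) powr (- avg_degree V E))
      \<le> t / (1 + t) * Z * (\<Sum>v\<in>V. (1 + t) powr (- real (vertex_degree E v)))"
    using \<open>Z > 0\<close> t by (intro mult_left_mono) simp_all
  also have "\<dots> = (\<Sum>v\<in>V. t / (1 + t) * Z * (1 + t) powr (- real (vertex_degree E v)))"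
    by (simp add: sum_distrib_left)
  also have "\<dots> \<le> (\<Sum>v\<in>V. \<Sum>I\<in>{I\<in>indep_sets V E. v \<in> I}. t ^ card I)"
    unfolding Z_def using sum_indep_sets_containing_ge[OF sg _ t] by (rule sum_mono)
  also have "\<dots> = indep_size_poly V E t"
    unfolding indep_size_poly_def
    using simple_graph_finite[OF sg] finite_indep_sets[OF simple_graph_finite[OF sg]]
    by (subst sum_card_mult_eq_sum_members) (auto dest: indep_sets_subset)
  finally show ?thesis
    using \<open>Z > 0\<close> unfolding Z_def by (simp add: pos_le_divide_eq ac_simps)
qed

lemma DERIV_indep_poly:
  assumes "t \<noteq> 0"
  shows "(indep_poly V E has_real_derivative indep_size_poly V E t / t) (at t)"
proof -
  have "(indep_poly V E has_real_derivative
      (\<Sum>I\<in>indep_sets V E. real (card I) * t ^ (card I - 1))) (at t)"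
    unfolding indep_poly_def[abs_def] by (intro DERIV_sum) (simp add: DERIV_pow)
  moreover have "real n * t ^ (n - 1) = real n * t ^ n / t" for n
    using assms by (cases n) auto
  ultimately show ?thesis
    unfolding indep_size_poly_def by (simp add: sum_divide_distrib)
qed

lemma log_deriv_indep_poly_ge:
  assumes sg: "simple_graph V E" and t: "t > 0"
  shows "real (card V) * (1 + t) powr (- avg_degree V E - 1)
    \<le> indep_size_poly V E t / t / indep_poly V E t"
proof -
  have "real (card V) * (1 + t) powr (- avg_degree V E - 1)
      = t / (1 + t) * real (card V) * (1 + t) powr (- avg_degree V E) / t"
    using t by (simp add: powr_diff)
  also have "\<dots> \<le> indep_size_poly V E t / indep_poly V E t / t"
    by (rule divide_right_mono[OF indep_size_poly_ge[OF sg t]]) (use t in simp)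
  finally show ?thesis
    by (simp add: mult.commute)
qed

lemma continuous_on_indep_poly: "continuous_on S (indep_poly V E)"
  unfolding indep_poly_def[abs_def] by (intro continuous_intros)

lemma DERIV_powr_primitive:
  fixes y d x :: real
  assumes "x > -1" and "d \<ge> 0"
  shows "((\<lambda>x. if d = 0 then y * ln (1 + x) else y / d * (1 - (1 + x) powr (- d)))
    has_real_derivative y * (1 + x) powr (- d - 1)) (at x)"
proof (cases "d = 0")
  case True
  have "((\<lambda>x. y * ln (1 + x)) has_real_derivative y * (1 / (1 + x))) (at x)"
    using assms by (auto intro!: derivative_eq_intros)
  then show ?thesis
    using True assms by (simp add: powr_minus_divide)
next
  case False
  have "((\<lambda>x. y / d * (1 - (1 + x) powr (- d)))
      has_real_derivative y / d * (- (- d * (1 + x) powr (- d - 1)))) (at x)"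
    using assms by (auto intro!: derivative_eq_intros)
  then show ?thesis
    using False by simp
qed

lemma ln_ge_powr_primitive:
  fixes f f' :: "real \<Rightarrow> real"
  assumes "lam \<ge> 0" and "d \<ge> 0" and "f 0 = 1"
    and pos: "\<And>x. 0 \<le> x \<Longrightarrow> f x > 0"
    and deriv: "\<And>x. 0 < x \<Longrightarrow> (f has_real_derivative f' x) (at x)"
    and cont: "continuous_on {0..lam} f"
    and log_deriv: "\<And>x. 0 < x \<Longrightarrow> y * (1 + x) powr (- d - 1) \<le> f' x / f x"
  shows "ln (f lam) \<ge> (if d = 0 then y * ln (1 + lam) else y / d * (1 - (1 + lam) powr (- d)))"
proof -
  define h where "h = (\<lambda>x. if d = 0 then y * ln (1 + x) else y / d * (1 - (1 + x) powr (- d)))"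
  define g where "g = (\<lambda>x. ln (f x) - h x)"
  have h_deriv: "(h has_real_derivative y * (1 + x) powr (- d - 1)) (at x)" if "x \<ge> 0" for x
    unfolding h_def using that \<open>d \<ge> 0\<close> by (intro DERIV_powr_primitive) auto
  have "g 0 \<le> g lam"
  proof (rule DERIV_nonneg_imp_increasing_open[OF \<open>lam \<ge> 0\<close>])
    fix x assume "0 < x" "x < lam"
    then have "(g has_real_derivative 1 / f x * f' x - y * (1 + x) powr (- d - 1)) (at x)"
      unfolding g_def using deriv pos h_deriv
      by (intro DERIV_diff DERIV_chain2[OF DERIV_ln_divide]) auto
    then show "\<exists>g'. (g has_real_derivative g') (at x) \<and> 0 \<le> g'"
      using log_deriv[OF \<open>0 < x\<close>] by auto
  next
    have "continuous_on {0..lam} h"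
      using h_deriv DERIV_isCont by (intro continuous_at_imp_continuous_on) fastforce
    moreover have "\<forall>x\<in>{0..lam}. f x \<noteq> 0"
      using pos by (metis atLeastAtMost_iff less_irrefl)
    ultimately show "continuous_on {0..lam} g"
      unfolding g_def using cont by (intro continuous_intros)
  qed
  moreover have "g 0 = 0"
    unfolding g_def h_def using \<open>f 0 = 1\<close> by simp
  ultimately show ?thesis
    unfolding g_def h_def by simp
qed

theorem mainTheorem5:
  fixes V :: "'a set" and E :: "'a set set" and lam :: real
  assumes "simple_graph V E" and "card V \<ge> 1" and "lam > 0"
  defines "y \<equiv> real (card V)" and "d \<equiv> avg_degree V E"
  shows "lam * deriv (indep_poly V E) lam / indep_poly V E lam
           \<ge> lam / (1 + lam) * y * (1 + lam) powr (- d)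
         \<and> ln (indep_poly V E lam)
           \<ge> (if d = 0 then y * ln (1 + lam) else y / d * (1 - (1 + lam) powr (- d)))"
proof -
  note sg = \<open>simple_graph V E\<close>
  have "deriv (indep_poly V E) lam = indep_size_poly V E lam / lam"
    using \<open>lam > 0\<close> by (intro DERIV_imp_deriv DERIV_indep_poly) simp
  then have "lam * deriv (indep_poly V E) lam / indep_poly V E lam
      \<ge> lam / (1 + lam) * y * (1 + lam) powr (- d)"
    using indep_size_poly_ge[OF sg \<open>lam > 0\<close>] \<open>lam > 0\<close> unfolding y_def d_def by simp
  moreover have "ln (indep_poly V E lam)
      \<ge> (if d = 0 then y * ln (1 + lam) else y / d * (1 - (1 + lam) powr (- d)))"
  proof (rule ln_ge_powr_primitive[where f' = "\<lambda>x. indep_size_poly V E x / x"])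
    show "d \<ge> 0" unfolding d_def avg_degree_def by simp
    show "x \<ge> 0 \<Longrightarrow> indep_poly V E x > 0" for x
      using indep_poly_ge_1[OF sg] by fastforce
    show "x > 0 \<Longrightarrow> y * (1 + x) powr (- d - 1) \<le> indep_size_poly V E x / x / indep_poly V E x"
      for x unfolding y_def d_def by (rule log_deriv_indep_poly_ge[OF sg])
  qed (use \<open>lam > 0\<close> indep_poly_0[OF sg] continuous_on_indep_poly
         in \<open>auto intro: DERIV_indep_poly\<close>)
  ultimately show ?thesis ..
qed

end
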